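(* Every syndetically distal compact flow $(T,X)$ ($T$ a Hausdorff topological group, $X$ a compact Hausdorff space) is pointwise Bohr a.p.; that is, for every $x\in X$ the subflow $(T,\overline{Tx})$ is an a.p. flow.
   Context: $\mathscr U_X$ is the uniformity of $X$; $\varepsilon[x]=\{y:(x,y)\in\varepsilon\}$. $A\subseteq T$ is (right) syndetic if there is a compact $K\subseteq T$ with $Kt\cap A\neq\emptyset$ for all $t\in T$. $(T,X)$ is syndetically distal if for every $x\in X$ and $\varepsilon\in\mathscr U_X$ there exist a syndetic $S\subseteq T$ and $\delta\in\mathscr U_X$ such that whenever $y\notin\varepsilon[x]$ we have $ty\notin\delta[tx]$ for all $t\in S$. A flow $(T,Z)$ is an a.p. flow if for every $\alpha$ in its uniformity there is a syndetic $A\subseteq T$ with $Az\subseteq\alpha[z]$ for all $z\in Z$. *)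

theory Defs
  imports "HOL-Analysis.Analysis"
begin

text \<open>T is a Hausdorff topological group, written additively (group_add need not be
commutative). X is a uniform space; for compact Hausdorff X its uniformity is the unique
one compatible with the topology.\<close>

definition entourage :: "('x::uniform_space \<times> 'x) set \<Rightarrow> bool" where
  "entourage E \<longleftrightarrow> eventually (\<lambda>p. p \<in> E) uniformity"

definition ent_ball :: "('x \<times> 'x) set \<Rightarrow> 'x \<Rightarrow> 'x set" where
  "ent_ball E x = {y. (x, y) \<in> E}"

definition is_flow :: "('g::topological_group_add \<Rightarrow> 'x::topological_space \<Rightarrow> 'x) \<Rightarrow> bool" where
  "is_flow act \<longleftrightarrow> continuous_on UNIV (\<lambda>p. act (fst p) (snd p))
     \<and> (\<forall>x. act 0 x = x) \<and> (\<forall>s t x. act (s + t) x = act s (act t x))"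

definition syndetic :: "'g::topological_group_add set \<Rightarrow> bool" where
  "syndetic A \<longleftrightarrow> (\<exists>K. compact K \<and> (\<forall>t. (\<lambda>k. k + t) ` K \<inter> A \<noteq> {}))"

definition syndetically_distal ::
  "('g::topological_group_add \<Rightarrow> 'x::uniform_space \<Rightarrow> 'x) \<Rightarrow> bool" where
  "syndetically_distal act \<longleftrightarrow>
     (\<forall>x \<epsilon>. entourage \<epsilon> \<longrightarrow>
        (\<exists>S \<delta>. syndetic S \<and> entourage \<delta> \<and>
           (\<forall>y. y \<notin> ent_ball \<epsilon> x \<longrightarrow> (\<forall>t\<in>S. act t y \<notin> ent_ball \<delta> (act t x)))))"

text \<open>The subflow on an invariant set Z is a.p.: entourages of Z are E \<inter> Z \<times> Z for
entourages E of X (subspace uniformity).\<close>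
definition ap_subflow ::
  "('g::topological_group_add \<Rightarrow> 'x::uniform_space \<Rightarrow> 'x) \<Rightarrow> 'x set \<Rightarrow> bool" where
  "ap_subflow act Z \<longleftrightarrow>
     (\<forall>E. entourage E \<longrightarrow>
        (\<exists>A. syndetic A \<and> (\<forall>z\<in>Z. (\<lambda>a. act a z) ` A \<subseteq> ent_ball (E \<inter> Z \<times> Z) z)))"

definition orbit :: "('g \<Rightarrow> 'x \<Rightarrow> 'x) \<Rightarrow> 'x \<Rightarrow> 'x set" where
  "orbit act x = range (\<lambda>t. act t x)"

end

theory Submission
  imports Defs
begin

text \<open>Since the window K witnessing syndeticity is compact, the
maps act k for k in K are uniformly equicontinuous, so closeness of act r x and act r y at a
single time r already forces x and y to be close. A cluster-point argument turns this into
equicontinuity of the whole family of maps act r at every point, hence, X being compact,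
uniform equicontinuity. Total boundedness of X then shows that finitely many translations
uniformly approximate every translation; consequently the times a with act a uniformly close
to the identity form a syndetic set, and the flow is a.p. on all of X, in particular on
every orbit closure.\<close>

lemma entourage_refl: "entourage E \<Longrightarrow> (x, x) \<in> E"
  unfolding entourage_def using uniformity_refl[of "\<lambda>p. p \<in> E"] by auto

lemma entourage_Int: "entourage E \<Longrightarrow> entourage F \<Longrightarrow> entourage (E \<inter> F)"
  unfolding entourage_def by (simp add: eventually_conj)

lemma entourage_converse: "entourage E \<Longrightarrow> entourage (converse E)"
  unfolding entourage_def by (drule uniformity_sym) (auto elim: eventually_mono)

lemma entourage_INT:
  "finite I \<Longrightarrow> (\<And>i. i \<in> I \<Longrightarrow> entourage (E i)) \<Longrightarrow> entourage (\<Inter>i\<in>I. E i)"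
  unfolding entourage_def by (simp add: eventually_ball_finite)

lemma entourage_split:
  assumes "entourage E"
  obtains D where "entourage D" "sym D" "D O D \<subseteq> E"
proof -
  obtain D0 where D0: "eventually D0 uniformity" "\<And>x y z. D0 (x, y) \<Longrightarrow> D0 (y, z) \<Longrightarrow> (x, z) \<in> E"
    using assms unfolding entourage_def by (rule uniformity_transE) blast
  define D where "D = Collect D0 \<inter> converse (Collect D0)"
  have "entourage (Collect D0)"
    using D0(1) by (simp add: entourage_def)
  then have "entourage D"
    unfolding D_def by (intro entourage_Int entourage_converse)
  moreover have "sym D"
    unfolding D_def by (auto intro: symI)
  moreover have "D O D \<subseteq> E"
    unfolding D_def by (blast intro: D0(2))
  ultimately show ?thesis
    by (rule that)
qed

lemma sym_relcompD: "sym D \<Longrightarrow> D O D \<subseteq> E \<Longrightarrow> (y, x) \<in> D \<Longrightarrow> (y, z) \<in> D \<Longrightarrow> (x, z) \<in> E"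
  by (meson relcompI subsetD symD)

lemma mem_interior_ent_ball:
  assumes "entourage E"
  shows "x \<in> interior (ent_ball E x)"
proof -
  have "eventually (\<lambda>y. y \<in> ent_ball E x) (nhds x)"
    using assms unfolding eventually_nhds_uniformity entourage_def ent_ball_def
    by (auto elim: eventually_mono)
  then show ?thesis
    unfolding eventually_nhds by (auto intro: interiorI)
qed

lemma mem_interior_ent_ballD: "y \<in> interior (ent_ball E x) \<Longrightarrow> (x, y) \<in> E"
  using interior_subset unfolding ent_ball_def by blast

lemma nhds_imp_entourage:
  assumes "open U" "x \<in> U"
  obtains E where "entourage E" "ent_ball E x \<subseteq> U"
proof -
  have "eventually (\<lambda>y. y \<in> U) (nhds x)"
    using assms eventually_nhds by blast
  then have "entourage {p. fst p = x \<longrightarrow> snd p \<in> U}"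
    unfolding eventually_nhds_uniformity entourage_def by (simp add: case_prod_unfold)
  then show ?thesis
    by (rule that) (auto simp: ent_ball_def)
qed

lemma compact_UNIV_ent_ball_cover:
  fixes E :: "'a \<Rightarrow> ('a::uniform_space \<times> 'a) set"
  assumes "compact (UNIV :: 'a set)" "\<And>x. entourage (E x)"
  obtains C where "finite C" "\<forall>y. \<exists>x\<in>C. y \<in> interior (ent_ball (E x) x)"
proof -
  have "UNIV \<subseteq> (\<Union>x. interior (ent_ball (E x) x))"
    using mem_interior_ent_ball[OF assms(2)] by blast
  then obtain C where "C \<subseteq> UNIV" "finite C" "UNIV \<subseteq> (\<Union>x\<in>C. interior (ent_ball (E x) x))"
    by (rule compactE_image[OF assms(1) open_interior])
  then show ?thesis
    by (intro that) auto
qed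

lemma compact_UNIV_finite_net:
  fixes E :: "('a::uniform_space \<times> 'a) set"
  assumes "compact (UNIV :: 'a set)" "entourage E"
  obtains C where "finite C" "\<forall>y. \<exists>x\<in>C. (x, y) \<in> E"
proof -
  obtain C where "finite C" "\<forall>y. \<exists>x\<in>C. y \<in> interior (ent_ball E x)"
    by (rule compact_UNIV_ent_ball_cover[of "\<lambda>_. E", OF assms])
  then show ?thesis
    by (intro that) (auto dest: mem_interior_ent_ballD)
qed

lemma compact_UNIV_cluster_point:
  fixes g :: "'i \<Rightarrow> 'a::uniform_space"
  assumes "compact (UNIV :: 'a set)"
    and ex: "\<And>D. entourage D \<Longrightarrow> \<exists>i. P D i"
    and mono: "\<And>D D' i. P D i \<Longrightarrow> D \<subseteq> D' \<Longrightarrow> P D' i"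
  obtains c where "\<forall>A D. entourage A \<longrightarrow> entourage D \<longrightarrow> (\<exists>i. P D i \<and> (c, g i) \<in> A)"
proof (rule ccontr)
  assume "\<not> thesis"
  with that have "\<forall>c. \<exists>A D. entourage A \<and> entourage D \<and> (\<forall>i. P D i \<longrightarrow> (c, g i) \<notin> A)"
    by blast
  then obtain A D where A: "\<And>c. entourage (A c)" and D: "\<And>c. entourage (D c)"
    and AD: "\<And>c i. P (D c) i \<Longrightarrow> (c, g i) \<notin> A c"
    by metis
  obtain C where C: "finite C" "\<forall>y. \<exists>c\<in>C. y \<in> interior (ent_ball (A c) c)"
    by (rule compact_UNIV_ent_ball_cover[of A, OF assms(1) A])
  have "entourage (\<Inter>c\<in>C. D c)"
    using C(1) D by (rule entourage_INT)
  then obtain i where i: "P (\<Inter>c\<in>C. D c) i"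
    using ex by blast
  obtain c where c: "c \<in> C" "g i \<in> interior (ent_ball (A c) c)"
    using C(2) by blast
  have "P (D c) i"
    using mono[OF i] c(1) by blast
  with c(2) show False
    using AD mem_interior_ent_ballD by blast
qed

subsection \<open>Equicontinuity\<close>

definition equicontinuous_at :: "('i \<Rightarrow> 'x::uniform_space \<Rightarrow> 'y::uniform_space) \<Rightarrow> 'i set \<Rightarrow> 'x \<Rightarrow> bool"
  where "equicontinuous_at f I u \<longleftrightarrow>
    (\<forall>E. entourage E \<longrightarrow> (\<exists>D. entourage D \<and> (\<forall>i\<in>I. \<forall>v. (u, v) \<in> D \<longrightarrow> (f i u, f i v) \<in> E)))"

definition uniformly_equicontinuous :: "('i \<Rightarrow> 'x::uniform_space \<Rightarrow> 'y::uniform_space) \<Rightarrow> 'i set \<Rightarrow> bool"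
  where "uniformly_equicontinuous f I \<longleftrightarrow>
    (\<forall>E. entourage E \<longrightarrow> (\<exists>D. entourage D \<and> (\<forall>i\<in>I. \<forall>u v. (u, v) \<in> D \<longrightarrow> (f i u, f i v) \<in> E)))"

lemma compact_equicontinuous_imp_uniformly_equicontinuous:
  fixes f :: "'i \<Rightarrow> 'x::uniform_space \<Rightarrow> 'y::uniform_space"
  assumes "compact (UNIV :: 'x set)" and equi: "\<And>u. equicontinuous_at f I u"
  shows "uniformly_equicontinuous f I"
  unfolding uniformly_equicontinuous_def
proof (intro allI impI)
  fix E :: "('y \<times> 'y) set"
  assume "entourage E"
  then obtain E1 where E1: "entourage E1" "sym E1" "E1 O E1 \<subseteq> E"
    by (rule entourage_split)
  have "\<exists>D. entourage D \<and> (\<forall>i\<in>I. \<forall>a b. (p, a) \<in> D \<longrightarrow> (a, b) \<in> D \<longrightarrow> (f i p, f i b) \<in> E1)" for p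
  proof -
    obtain \<eta> where \<eta>: "entourage \<eta>" "\<forall>i\<in>I. \<forall>v. (p, v) \<in> \<eta> \<longrightarrow> (f i p, f i v) \<in> E1"
      using equi E1(1) unfolding equicontinuous_at_def by blast
    obtain D where "entourage D" "D O D \<subseteq> \<eta>"
      using \<eta>(1) by (rule entourage_split)
    with \<eta>(2) show ?thesis
      by blast
  qed
  then obtain D where D: "\<And>p. entourage (D p)"
    and close: "\<And>p i a b. i \<in> I \<Longrightarrow> (p, a) \<in> D p \<Longrightarrow> (a, b) \<in> D p \<Longrightarrow> (f i p, f i b) \<in> E1"
    by metis
  obtain C where C: "finite C" "\<forall>u. \<exists>c\<in>C. u \<in> interior (ent_ball (D c) c)"
    by (rule compact_UNIV_ent_ball_cover[of D, OF assms(1) D])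
  have "(f i u, f i v) \<in> E" if "i \<in> I" "(u, v) \<in> (\<Inter>c\<in>C. D c)" for i u v
  proof -
    obtain c where c: "c \<in> C" "(c, u) \<in> D c"
      using C(2) mem_interior_ent_ballD by blast
    have "(f i c, f i u) \<in> E1"
      using close[OF that(1) c(2) entourage_refl[OF D]] .
    moreover have "(f i c, f i v) \<in> E1"
      using close[OF that(1) c(2)] that(2) c(1) by blast
    ultimately show ?thesis
      by (rule sym_relcompD[OF E1(2,3)])
  qed
  moreover have "entourage (\<Inter>c\<in>C. D c)"
    using C(1) D by (rule entourage_INT)
  ultimately show "\<exists>D. entourage D \<and> (\<forall>i\<in>I. \<forall>u v. (u, v) \<in> D \<longrightarrow> (f i u, f i v) \<in> E)"
    by blast
qed

lemma finite_image_representatives: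
  assumes "finite (\<phi> ` I)"
  obtains F where "finite F" "F \<subseteq> I" "\<forall>s\<in>I. \<exists>t\<in>F. \<phi> t = \<phi> s"
proof (rule that)
  show "finite (inv_into I \<phi> ` \<phi> ` I)"
    using assms by (rule finite_imageI)
  show "inv_into I \<phi> ` \<phi> ` I \<subseteq> I"
    by (auto intro: inv_into_into)
  show "\<forall>s\<in>I. \<exists>t\<in>inv_into I \<phi> ` \<phi> ` I. \<phi> t = \<phi> s"
    by (auto intro: f_inv_into_f)
qed

lemma uniformly_equicontinuous_finite_net:
  fixes f :: "'i \<Rightarrow> 'x::uniform_space \<Rightarrow> 'y::uniform_space"
  assumes "compact (UNIV :: 'x set)" "compact (UNIV :: 'y set)"
    and equi: "uniformly_equicontinuous f I" and "entourage E"
  obtains F where "finite F" "F \<subseteq> I" "\<forall>s\<in>I. \<exists>t\<in>F. \<forall>w. (f s w, f t w) \<in> E"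
proof -
  obtain E2 where E2: "entourage E2" "E2 O E2 \<subseteq> E"
    using \<open>entourage E\<close> by (rule entourage_split)
  obtain E1 where E1: "entourage E1" "sym E1" "E1 O E1 \<subseteq> E2"
    using E2(1) by (rule entourage_split)
  obtain D where D: "entourage D" "\<forall>i\<in>I. \<forall>u v. (u, v) \<in> D \<longrightarrow> (f i u, f i v) \<in> E1"
    using equi E1(1) unfolding uniformly_equicontinuous_def by blast
  obtain C where C: "finite C" "\<forall>w. \<exists>c\<in>C. (c, w) \<in> D"
    by (rule compact_UNIV_finite_net[OF assms(1) D(1)])
  obtain Y where Y: "finite Y" "\<forall>z. \<exists>y\<in>Y. (y, z) \<in> E1"
    by (rule compact_UNIV_finite_net[OF assms(2) E1(1)])
  \<comment> \<open>\<phi> s records, for each c in the net C, a point of Y near f s c; maps with equal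
    records are uniformly E-close, and there are only finitely many records.\<close>
  define \<phi> where "\<phi> s = (\<lambda>c\<in>C. SOME y. y \<in> Y \<and> (y, f s c) \<in> E1)" for s
  have \<phi>: "\<phi> s c \<in> Y \<and> (\<phi> s c, f s c) \<in> E1" if "c \<in> C" for s c
  proof -
    have "\<exists>y. y \<in> Y \<and> (y, f s c) \<in> E1"
      using Y(2) by blast
    then have "(SOME y. y \<in> Y \<and> (y, f s c) \<in> E1) \<in> Y \<and> (SOME y. y \<in> Y \<and> (y, f s c) \<in> E1, f s c) \<in> E1"
      by (rule someI_ex)
    with that show ?thesis
      unfolding \<phi>_def by simp
  qed
  have "\<phi> ` I \<subseteq> (\<Pi>\<^sub>E c\<in>C. Y)"
    using \<phi> unfolding \<phi>_def by auto
  then have "finite (\<phi> ` I)"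
    using finite_PiE[OF C(1), of "\<lambda>_. Y"] Y(1) by (auto intro: finite_subset)
  have close: "(f s w, f t w) \<in> E" if "s \<in> I" "t \<in> I" "\<phi> t = \<phi> s" for s t w
  proof -
    obtain c where c: "c \<in> C" "(c, w) \<in> D"
      using C(2) by blast
    have "(f s c, f s w) \<in> E1" "(f t c, f t w) \<in> E1"
      using D(2) c(2) that(1,2) by blast+
    moreover have "(\<phi> s c, f s c) \<in> E1" "(\<phi> s c, f t c) \<in> E1"
      using \<phi>[OF c(1), of s] \<phi>[OF c(1), of t] that(3) by simp_all
    ultimately have "(f s w, \<phi> s c) \<in> E2" "(\<phi> s c, f t w) \<in> E2"
      using E1(2,3) by (blast dest: symD)+
    then show ?thesis
      using E2(2) by blast
  qed
  obtain F where "finite F" "F \<subseteq> I" "\<forall>s\<in>I. \<exists>t\<in>F. \<phi> t = \<phi> s"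
    using \<open>finite (\<phi> ` I)\<close> by (rule finite_image_representatives)
  with close show ?thesis
    by (intro that) blast+
qed

context
  fixes act :: "'g::topological_group_add \<Rightarrow> 'x::uniform_space \<Rightarrow> 'x"
  assumes flow: "is_flow act"
begin

lemma act_add: "act (s + t) x = act s (act t x)"
  using flow unfolding is_flow_def by blast

lemma act_zero: "act 0 x = x"
  using flow unfolding is_flow_def by blast

lemma act_minus_act: "act (- r) (act r x) = x"
  by (metis act_add act_zero left_minus)

lemma act_act_minus: "act r (act (- r) x) = x"
  by (metis act_add act_zero right_minus)

lemma continuous_on_act: "continuous_on UNIV (\<lambda>p. act (fst p) (snd p))"
  using flow unfolding is_flow_def by blast

lemma act_continuous_entourage:
  assumes "entourage E"
  obtains W F where "open W" "k \<in> W" "entourage F"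
    "\<forall>k'\<in>W. \<forall>v\<in>ent_ball F u. (act k u, act k' v) \<in> E"
proof -
  let ?U = "interior (ent_ball E (act k u))"
  have "open ((\<lambda>p. act (fst p) (snd p)) -` ?U)"
    using continuous_on_act by (simp add: continuous_on_open_vimage)
  moreover have "(k, u) \<in> (\<lambda>p. act (fst p) (snd p)) -` ?U"
    using mem_interior_ent_ball[OF assms] by simp
  ultimately obtain W V where WV: "open W" "open V" "(k, u) \<in> W \<times> V"
    "W \<times> V \<subseteq> (\<lambda>p. act (fst p) (snd p)) -` ?U"
    by (rule open_prod_elim)
  have "u \<in> V"
    using WV(3) by simp
  with WV(2) obtain F where F: "entourage F" "ent_ball F u \<subseteq> V"
    by (rule nhds_imp_entourage)
  have "(act k u, act k' v) \<in> E" if "k' \<in> W" "v \<in> ent_ball F u" for k' v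
  proof (rule mem_interior_ent_ballD)
    have "v \<in> V"
      using F(2) that(2) by (rule subsetD)
    then show "act k' v \<in> ?U"
      using subsetD[OF WV(4), of "(k', v)"] that(1) by simp
  qed
  with WV(1,3) F(1) show ?thesis
    by (intro that) auto
qed

lemma equicontinuous_at_act_compact:
  assumes "compact K"
  shows "equicontinuous_at act K u"
  unfolding equicontinuous_at_def
proof (intro allI impI)
  fix E :: "('x \<times> 'x) set"
  assume "entourage E"
  then obtain E1 where E1: "entourage E1" "sym E1" "E1 O E1 \<subseteq> E"
    by (rule entourage_split)
  define good where "good k W F \<longleftrightarrow> open W \<and> k \<in> W \<and> entourage F \<and>
    (\<forall>k'\<in>W. \<forall>v\<in>ent_ball F u. (act k u, act k' v) \<in> E1)" for k W F
  have "\<exists>W F. good k W F" for k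
    unfolding good_def by (rule act_continuous_entourage[OF E1(1)]) blast
  then obtain W F where "\<And>k. good k (W k) (F k)"
    by metis
  then have W: "\<And>k. open (W k)" "\<And>k. k \<in> W k" and F: "\<And>k. entourage (F k)"
    and close: "\<And>k k' v. k' \<in> W k \<Longrightarrow> v \<in> ent_ball (F k) u \<Longrightarrow> (act k u, act k' v) \<in> E1"
    unfolding good_def by auto
  have "K \<subseteq> (\<Union>k\<in>K. W k)"
    using W(2) by blast
  then obtain C where C: "C \<subseteq> K" "finite C" "K \<subseteq> (\<Union>c\<in>C. W c)"
    by (rule compactE_image[OF assms W(1)])
  have "(act k u, act k v) \<in> E" if k: "k \<in> K" and uv: "(u, v) \<in> (\<Inter>c\<in>C. F c)" for k v
  proof -
    obtain c where c: "c \<in> C" "k \<in> W c"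
      using C(3) k by blast
    have "u \<in> ent_ball (F c) u" "v \<in> ent_ball (F c) u"
      using entourage_refl[OF F] uv c(1) unfolding ent_ball_def by auto
    then have "(act c u, act k u) \<in> E1" "(act c u, act k v) \<in> E1"
      by (auto intro: close[OF c(2)])
    then show ?thesis
      by (rule sym_relcompD[OF E1(2,3)])
  qed
  moreover have "entourage (\<Inter>c\<in>C. F c)"
    using C(2) F by (rule entourage_INT)
  ultimately show "\<exists>D. entourage D \<and> (\<forall>k\<in>K. \<forall>v. (u, v) \<in> D \<longrightarrow> (act k u, act k v) \<in> E)"
    by blast
qed

lemma closure_orbit_invariant: "act a ` closure (orbit act x) \<subseteq> closure (orbit act x)"
proof (rule image_closure_subset)
  have "continuous_on UNIV ((\<lambda>p. act (fst p) (snd p)) \<circ> Pair a)"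
    by (intro continuous_on_compose continuous_intros continuous_on_subset[OF continuous_on_act]) auto
  then show "continuous_on (closure (orbit act x)) (act a)"
    by (auto simp: o_def intro: continuous_on_subset)
  show "act a ` orbit act x \<subseteq> closure (orbit act x)"
    unfolding orbit_def by (auto simp: act_add[symmetric] intro!: closure_subset[THEN subsetD])
qed simp

end

subsection \<open>Syndetically distal flows\<close>

context
  fixes act :: "'g::topological_group_add \<Rightarrow> 'x::uniform_space \<Rightarrow> 'x"
  assumes flow: "is_flow act" and compact: "compact (UNIV :: 'x set)"
    and distal: "syndetically_distal act"
begin

lemma close_translates_imp_close:
  assumes "entourage E"
  obtains D where "entourage D" "\<forall>r y. (act r x, act r y) \<in> D \<longrightarrow> (x, y) \<in> E"
proof -
  obtain S \<delta> where S: "syndetic S" "entourage \<delta>"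
    and apart: "\<forall>y. y \<notin> ent_ball E x \<longrightarrow> (\<forall>t\<in>S. act t y \<notin> ent_ball \<delta> (act t x))"
    using distal assms unfolding syndetically_distal_def by blast
  obtain K where K: "compact K" "\<forall>t. (\<lambda>k. k + t) ` K \<inter> S \<noteq> {}"
    using S(1) unfolding syndetic_def by blast
  have "uniformly_equicontinuous act K"
    using compact equicontinuous_at_act_compact[OF flow K(1)]
    by (rule compact_equicontinuous_imp_uniformly_equicontinuous)
  then obtain D where D: "entourage D" "\<forall>k\<in>K. \<forall>u v. (u, v) \<in> D \<longrightarrow> (act k u, act k v) \<in> \<delta>"
    using S(2) unfolding uniformly_equicontinuous_def by blast
  have "(x, y) \<in> E" if close: "(act r x, act r y) \<in> D" for r y
  proof (rule ccontr)
    assume "(x, y) \<notin> E"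
    then have "y \<notin> ent_ball E x"
      by (simp add: ent_ball_def)
    moreover obtain k where k: "k \<in> K" "k + r \<in> S"
      using K(2) by blast
    moreover have "(act k (act r x), act k (act r y)) \<in> \<delta>"
      using D(2) k(1) close by blast
    then have "act (k + r) y \<in> ent_ball \<delta> (act (k + r) x)"
      by (simp add: act_add[OF flow] ent_ball_def)
    ultimately show False
      using apart by blast
  qed
  with D(1) show ?thesis
    by (intro that) auto
qed

lemma translate_near_imp_close_translates:
  assumes "entourage E"
  obtains A D where "entourage A" "entourage D"
    "\<forall>r y. (x, y) \<in> D \<longrightarrow> (c, act r x) \<in> A \<longrightarrow> (act r x, act r y) \<in> E"
proof -
  obtain E1 where E1: "entourage E1" "sym E1" "E1 O E1 \<subseteq> E"
    using assms by (rule entourage_split)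
  obtain Dc where Dc: "entourage Dc" "\<forall>r y. (act r c, act r y) \<in> Dc \<longrightarrow> (c, y) \<in> E1"
    using E1(1) by (rule close_translates_imp_close)
  obtain D where D: "entourage D" "sym D" "D O D \<subseteq> Dc"
    using Dc(1) by (rule entourage_split)
  obtain Dx where Dx: "entourage Dx" "\<forall>r y. (act r x, act r y) \<in> Dx \<longrightarrow> (x, y) \<in> D"
    using D(1) by (rule close_translates_imp_close)
  have "(act r x, act r y) \<in> E" if xy: "(x, y) \<in> D" and cx: "(c, act r x) \<in> E1 \<inter> converse Dx" for r y
  proof -
    \<comment> \<open>Pull c back along r: the point act (- r) c is D-close to x, hence Dc-close to y.\<close>
    have "(x, act (- r) c) \<in> D"
      using Dx(2)[rule_format, of r "act (- r) c"] cx by (simp add: act_act_minus[OF flow])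
    then have "(act (- r) c, y) \<in> Dc"
      using xy by (rule sym_relcompD[OF D(2,3)])
    then have "(c, act r y) \<in> E1"
      using Dc(2) by (metis act_minus_act[OF flow] minus_minus)
    moreover have "(c, act r x) \<in> E1"
      using cx by blast
    ultimately show ?thesis
      using sym_relcompD[OF E1(2,3)] by blast
  qed
  moreover have "entourage (E1 \<inter> converse Dx)"
    using E1(1) Dx(1) by (intro entourage_Int entourage_converse)
  ultimately show ?thesis
    using D(1) that by blast
qed

lemma equicontinuous_at_act: "equicontinuous_at act UNIV x"
  unfolding equicontinuous_at_def
proof (intro allI impI, rule ccontr)
  fix E :: "('x \<times> 'x) set"
  assume E: "entourage E"
    and "\<not> (\<exists>D. entourage D \<and> (\<forall>r\<in>UNIV. \<forall>y. (x, y) \<in> D \<longrightarrow> (act r x, act r y) \<in> E))"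
  define bad where "bad D ry \<longleftrightarrow> (x, snd ry) \<in> D \<and> (act (fst ry) x, act (fst ry) (snd ry)) \<notin> E"
    for D ry
  then have "\<exists>ry. bad D ry" if "entourage D" for D
    using that \<open>\<not> _\<close> by auto
  moreover have "bad D' ry" if "bad D ry" "D \<subseteq> D'" for D D' ry
    using that unfolding bad_def by auto
  ultimately obtain c where c: "\<forall>A D. entourage A \<longrightarrow> entourage D \<longrightarrow> (\<exists>ry. bad D ry \<and> (c, act (fst ry) x) \<in> A)"
    by (rule compact_UNIV_cluster_point[OF compact])
  obtain A D where "entourage A" "entourage D"
    "\<forall>r y. (x, y) \<in> D \<longrightarrow> (c, act r x) \<in> A \<longrightarrow> (act r x, act r y) \<in> E"
    using E by (rule translate_near_imp_close_translates)
  with c show False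
    unfolding bad_def by fastforce
qed

lemma uniformly_equicontinuous_act: "uniformly_equicontinuous act UNIV"
  using compact equicontinuous_at_act by (rule compact_equicontinuous_imp_uniformly_equicontinuous)

lemma syndetic_uniform_return_times:
  assumes "entourage E"
  shows "syndetic {a. \<forall>z. (z, act a z) \<in> E}"
proof -
  obtain F where F: "finite F" "F \<subseteq> UNIV" "\<forall>s\<in>UNIV. \<exists>f\<in>F. \<forall>w. (act s w, act f w) \<in> E"
    by (rule uniformly_equicontinuous_finite_net[OF compact compact uniformly_equicontinuous_act assms])
  show ?thesis
    unfolding syndetic_def
  proof (intro exI[of _ F] conjI allI)
    show "compact F"
      using F(1) by (rule finite_imp_compact)
    fix t
    obtain f where f: "f \<in> F" "\<forall>w. (act (- t) w, act f w) \<in> E"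
      using F(3) by blast
    have "(z, act (f + t) z) \<in> E" for z
      using f(2) by (metis act_add[OF flow] act_minus_act[OF flow])
    with f(1) show "(\<lambda>k. k + t) ` F \<inter> {a. \<forall>z. (z, act a z) \<in> E} \<noteq> {}"
      by blast
  qed
qed

lemma ap_subflow_closure_orbit: "ap_subflow act (closure (orbit act x))"
  unfolding ap_subflow_def
proof (intro allI impI)
  fix E :: "('x \<times> 'x) set"
  assume "entourage E"
  let ?Z = "closure (orbit act x)"
  have "\<forall>z\<in>?Z. (\<lambda>a. act a z) ` {a. \<forall>z. (z, act a z) \<in> E} \<subseteq> ent_ball (E \<inter> ?Z \<times> ?Z) z"
    using closure_orbit_invariant[OF flow] unfolding ent_ball_def by blast
  with syndetic_uniform_return_times[OF \<open>entourage E\<close>]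
  show "\<exists>A. syndetic A \<and> (\<forall>z\<in>?Z. (\<lambda>a. act a z) ` A \<subseteq> ent_ball (E \<inter> ?Z \<times> ?Z) z)"
    by blast
qed

end

theorem theorem2p10:
  fixes act :: "'g::{topological_group_add, t2_space} \<Rightarrow> 'x::{uniform_space, t2_space} \<Rightarrow> 'x"
  assumes "compact (UNIV :: 'x set)"
    and "is_flow act"
    and "syndetically_distal act"
  shows "\<forall>x. ap_subflow act (closure (orbit act x))"
  using ap_subflow_closure_orbit[OF assms(2,1,3)] by blast

end
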